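(* Consider a two-bus network consisting of a single line with admittance $g-jb$ ($g,b\ge 0$) joining bus 1 and bus 2, where the voltage magnitudes $|V_1|,|V_2|>0$ are fixed. Let $\underline{\theta}\in[-\pi,0]$ and $\overline{\theta}\in[0,\pi]$, and let $\mathcal{P}\subset\mathbb{R}^2$ be the set of all points $(P_1,P_2)$ with $$P_1=|V_1|^2 g+|V_1||V_2| b\sin\theta-|V_1||V_2| g\cos\theta,\qquad P_2=|V_2|^2 g-|V_1||V_2| b\sin\theta-|V_1||V_2| g\cos\theta$$ obtained as $\theta$ ranges over $[\underline{\theta},\overline{\theta}]$. Then $\mathcal{O}(\mathcal{P})=\mathcal{O}(\mathrm{conv}(\mathcal{P}))$.
   Context: For a set $\mathcal{A}\subseteq\mathbb{R}^m$, a point $x\in\mathcal{A}$ is Pareto-optimal if there is no $y\in\mathcal{A}$ with $y\le x$ componentwise and strict inequality in at least one coordinate; $\mathcal{O}(\mathcal{A})$ denotes the set of Pareto-optimal points of $\mathcal{A}$. $\mathrm{conv}(\cdot)$ denotes the convex hull. Here $\theta=\theta_1-\theta_2$ is the difference of the voltage phase angles at the two buses, and $P_i$ is the real power injected at bus $i$. *)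

theory Defs
  imports "HOL-Analysis.Analysis"
begin

definition dominates :: "real \<times> real \<Rightarrow> real \<times> real \<Rightarrow> bool" where
  "dominates y x \<longleftrightarrow> fst y \<le> fst x \<and> snd y \<le> snd x \<and> (fst y < fst x \<or> snd y < snd x)"

definition pareto_set :: "(real \<times> real) set \<Rightarrow> (real \<times> real) set" where
  "pareto_set A = {x \<in> A. \<not> (\<exists>y\<in>A. dominates y x)}"

definition two_bus_injections ::
  "real \<Rightarrow> real \<Rightarrow> real \<Rightarrow> real \<Rightarrow> real \<Rightarrow> real \<times> real" where
  "two_bus_injections g b V1 V2 \<theta> =
     (V1^2 * g + V1 * V2 * b * sin \<theta> - V1 * V2 * g * cos \<theta>,
      V2^2 * g - V1 * V2 * b * sin \<theta> - V1 * V2 * g * cos \<theta>)"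

end

theory Submission
  imports Defs
begin

text \<open>Writing \<open>V1 V2 g = R cos \<alpha>\<close> and \<open>V1 V2 b = R sin \<alpha>\<close> with \<open>0 \<le> \<alpha> \<le> pi/2\<close>, the injections
  trace the ellipse arc \<open>f \<theta> = (c1 - R cos (\<theta> + \<alpha>), c2 - R cos (\<theta> - \<alpha>))\<close>. Both Pareto sets agree
  as soon as every point \<open>y\<close> of the convex hull lies above some arc point. The hull contains arc
  points below \<open>y\<close> in each coordinate separately, and since \<open>fst f - snd f\<close> depends on \<open>\<theta>\<close> only
  through \<open>sin \<theta>\<close>, the intermediate value theorem yields a parameter \<open>s\<close> with \<open>cos s > 0\<close> and
  \<open>f s = y + (t, t)\<close>. The functional \<open>(sin (\<alpha> - s), sin (\<alpha> + s))\<close> is minimised on the whole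
  ellipse at \<open>f s\<close> and has positive coordinate sum, so \<open>t > 0\<close> would separate \<open>y\<close> from the hull.\<close>

lemma dominates_iff: "dominates y x \<longleftrightarrow> y \<le> x \<and> y \<noteq> x"
  by (auto simp: dominates_def less_eq_prod_def prod_eq_iff)

lemma pareto_set_eq_if_minorized:
  assumes "A \<subseteq> B" and minor: "\<And>y. y \<in> B \<Longrightarrow> \<exists>p\<in>A. p \<le> y"
  shows "pareto_set A = pareto_set B"
proof
  show "pareto_set A \<subseteq> pareto_set B"
  proof
    fix x assume x: "x \<in> pareto_set A"
    have "\<not> dominates y x" if "y \<in> B" for y
    proof
      assume "dominates y x"
      obtain p where "p \<in> A" "p \<le> y" using minor \<open>y \<in> B\<close> by blast
      with \<open>dominates y x\<close> have "dominates p x"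
        by (auto simp: dominates_iff intro: order_trans order.antisym)
      with x \<open>p \<in> A\<close> show False by (auto simp: pareto_set_def)
    qed
    with x assms(1) show "x \<in> pareto_set B" by (auto simp: pareto_set_def)
  qed
next
  show "pareto_set B \<subseteq> pareto_set A"
  proof
    fix x assume x: "x \<in> pareto_set B"
    then obtain p where p: "p \<in> A" "p \<le> x" using minor[of x] by (auto simp: pareto_set_def)
    with x assms(1) have "p = x" by (auto simp: pareto_set_def dominates_iff)
    with x p assms(1) show "x \<in> pareto_set A" by (auto simp: pareto_set_def)
  qed
qed

lemma convex_hull_inner_le:
  fixes P :: "'a::real_inner set"
  assumes "y \<in> convex hull P"
  shows "\<exists>p\<in>P. l \<bullet> p \<le> l \<bullet> y"
proof (rule ccontr)
  assume "\<not> ?thesis"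
  then have "convex hull P \<subseteq> {z. l \<bullet> z > l \<bullet> y}"
    by (intro hull_minimal convex_halfspace_gt) (auto simp: not_le)
  with assms show False by auto
qed

lemma nonneg_polar_coordinates:
  fixes x y :: real
  assumes "0 \<le> x" "0 \<le> y"
  obtains R \<alpha> where "0 \<le> R" "0 \<le> \<alpha>" "\<alpha> \<le> pi/2" "x = R * cos \<alpha>" "y = R * sin \<alpha>"
proof (cases "x = 0 \<and> y = 0")
  case True
  then show ?thesis using that[of 0 0] by simp
next
  case nonzero: False
  define R where "R = sqrt (x\<^sup>2 + y\<^sup>2)"
  have "0 < x\<^sup>2 + y\<^sup>2" using nonzero by (simp add: sum_power2_gt_zero_iff)
  then have "0 < R" by (simp add: R_def)
  then have "(x / R)\<^sup>2 + (y / R)\<^sup>2 = 1"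
    by (simp add: R_def power_divide add_divide_distrib[symmetric] sum_power2_gt_zero_iff)
  then obtain \<alpha> where "0 \<le> \<alpha>" "\<alpha> \<le> pi/2" "x / R = cos \<alpha>" "y / R = sin \<alpha>"
    using sincos_total_pi_half assms by (meson divide_nonneg_pos \<open>0 < R\<close>)
  with \<open>0 < R\<close> show ?thesis using that[of R \<alpha>] by (simp add: field_simps)
qed

lemma sin_attains_with_pos_cos:
  fixes lo hi :: real
  assumes "-pi \<le> lo" "lo \<le> 0" "0 \<le> hi" "hi \<le> pi"
    and "\<theta>1 \<in> {lo..hi}" "\<theta>2 \<in> {lo..hi}" "sin \<theta>1 < z" "z < sin \<theta>2"
  obtains s where "s \<in> {lo..hi}" "0 < cos s" "sin s = z"
proof -
  have "connected (sin ` {lo..hi})"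
    by (rule connected_continuous_image) (auto intro: continuous_intros)
  moreover have "sin \<theta>1 \<in> sin ` {lo..hi}" "sin \<theta>2 \<in> sin ` {lo..hi}"
    using assms(5,6) by blast+
  ultimately have "z \<in> sin ` {lo..hi}"
    using assms(7,8) by (meson connectedD_interval less_imp_le)
  then obtain s where s: "s \<in> {lo..hi}" "sin s = z" by blast
  have "sin s \<noteq> 1" "sin s \<noteq> -1"
    using assms(7,8) s(2) sin_ge_minus_one[of \<theta>1] sin_le_one[of \<theta>2] by linarith+
  then have "(sin s)\<^sup>2 \<noteq> 1" by (simp add: power2_eq_1_iff)
  then have "cos s \<noteq> 0" by (auto simp: sin_squared_eq)
  \<comment> \<open>outside \<open>[-pi/2, pi/2]\<close>, reflecting \<open>s\<close> to \<open>\<plusminus>pi - s\<close> keeps \<open>sin\<close> and flips \<open>cos\<close>\<close>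
  consider "-(pi/2) \<le> s" "s \<le> pi/2" | "pi/2 < s" | "s < -(pi/2)" by linarith
  then show ?thesis
  proof cases
    case 1
    with \<open>cos s \<noteq> 0\<close> have "0 < cos s" using cos_ge_zero[of s] by linarith
    with s that show ?thesis by blast
  next
    case 2
    have "0 \<le> cos (pi - s)"
      using 2 s(1) assms(4) by (intro cos_ge_zero) auto
    with \<open>cos s \<noteq> 0\<close> have "0 < cos (pi - s)" by simp
    moreover have "pi - s \<in> {lo..hi}" using 2 s(1) assms(2,4) by auto
    ultimately show ?thesis using s(2) by (intro that[of "pi - s"]) auto
  next
    case 3
    have "cos (-pi - s) = - cos s" "sin (-pi - s) = sin s"
      by (simp_all add: cos_diff sin_diff)
    moreover have "0 \<le> cos (-pi - s)"
      using 3 s(1) assms(1) by (intro cos_ge_zero) auto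
    moreover have "-pi - s \<in> {lo..hi}" using 3 s(1) assms(1,3) by auto
    ultimately show ?thesis using s(2) \<open>cos s \<noteq> 0\<close> by (intro that[of "-pi - s"]) auto
  qed
qed

definition ellipse_arc :: "real \<Rightarrow> real \<Rightarrow> real \<Rightarrow> real \<Rightarrow> real \<Rightarrow> real \<times> real" where
  "ellipse_arc c1 c2 R \<alpha> \<theta> = (c1 - R * cos (\<theta> + \<alpha>), c2 - R * cos (\<theta> - \<alpha>))"

lemma two_bus_injections_eq_ellipse_arc:
  assumes "V1 * V2 * g = R * cos \<alpha>" "V1 * V2 * b = R * sin \<alpha>"
  shows "two_bus_injections g b V1 V2 = ellipse_arc (V1\<^sup>2 * g) (V2\<^sup>2 * g) R \<alpha>"
  unfolding two_bus_injections_def ellipse_arc_def assms cos_add cos_diff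
  by (simp add: algebra_simps)

lemma ellipse_arc_fst_minus_snd:
  "fst (ellipse_arc c1 c2 R \<alpha> \<theta>) - snd (ellipse_arc c1 c2 R \<alpha> \<theta>) = c1 - c2 + 2 * R * sin \<alpha> * sin \<theta>"
  by (simp add: ellipse_arc_def cos_add cos_diff algebra_simps)

lemma inner_ellipse_arc:
  "(sin (\<alpha> - s), sin (\<alpha> + s)) \<bullet> ellipse_arc c1 c2 R \<alpha> \<theta>
     = sin (\<alpha> - s) * c1 + sin (\<alpha> + s) * c2 - R * sin (2 * \<alpha>) * cos (\<theta> - s)"
  unfolding ellipse_arc_def sin_double sin_add sin_diff cos_add cos_diff
  by (simp add: algebra_simps)

lemma ellipse_arc_supporting:
  assumes "0 \<le> R" "0 \<le> \<alpha>" "\<alpha> \<le> pi/2"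
  shows "(sin (\<alpha> - s), sin (\<alpha> + s)) \<bullet> ellipse_arc c1 c2 R \<alpha> s
     \<le> (sin (\<alpha> - s), sin (\<alpha> + s)) \<bullet> ellipse_arc c1 c2 R \<alpha> \<theta>"
proof -
  have "0 \<le> R * sin (2 * \<alpha>)"
    using assms by (intro mult_nonneg_nonneg sin_ge_zero) auto
  then have "R * sin (2 * \<alpha>) * cos (\<theta> - s) \<le> R * sin (2 * \<alpha>)"
    by (simp add: mult_left_le)
  then show ?thesis by (simp add: inner_ellipse_arc)
qed

lemma ellipse_arc_le_if_diagonal_in_convex_hull:
  assumes "0 \<le> R" "0 < \<alpha>" "\<alpha> \<le> pi/2" "0 < cos s"
    and y: "y \<in> convex hull (ellipse_arc c1 c2 R \<alpha> ` A)"
    and diagonal: "fst (ellipse_arc c1 c2 R \<alpha> s) - fst y = snd (ellipse_arc c1 c2 R \<alpha> s) - snd y"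
  shows "ellipse_arc c1 c2 R \<alpha> s \<le> y"
proof -
  let ?f = "ellipse_arc c1 c2 R \<alpha>"
  define l where "l = (sin (\<alpha> - s), sin (\<alpha> + s))"
  define t where "t = fst (?f s) - fst y"
  have "fst l + snd l = 2 * sin \<alpha> * cos s"
    by (simp add: l_def sin_add sin_diff)
  moreover have "0 < sin \<alpha>" using assms by (intro sin_gt_zero) auto
  ultimately have "0 < fst l + snd l" using assms(4) by simp
  have "fst y = fst (?f s) - t" "snd y = snd (?f s) - t"
    using diagonal by (simp_all add: t_def)
  have "l \<bullet> y = fst l * (fst (?f s) - t) + snd l * (snd (?f s) - t)"
    by (simp add: inner_prod_def \<open>fst y = _\<close> \<open>snd y = _\<close>)
  also have "\<dots> = l \<bullet> ?f s - t * (fst l + snd l)"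
    by (simp add: inner_prod_def algebra_simps)
  finally have inner_y: "l \<bullet> y = l \<bullet> ?f s - t * (fst l + snd l)" .
  obtain \<theta> where "l \<bullet> ?f \<theta> \<le> l \<bullet> y"
    using convex_hull_inner_le[OF y] by blast
  moreover have "l \<bullet> ?f s \<le> l \<bullet> ?f \<theta>"
    unfolding l_def using assms(1,2,3) by (intro ellipse_arc_supporting) auto
  ultimately have "l \<bullet> ?f s \<le> l \<bullet> y" by linarith
  with inner_y \<open>0 < fst l + snd l\<close> have "t \<le> 0"
    by (simp add: mult_le_0_iff)
  then show ?thesis using diagonal by (simp add: t_def less_eq_prod_def)
qed

lemma ellipse_arc_minorizes_convex_hull:
  assumes "0 \<le> R" "0 \<le> \<alpha>" "\<alpha> \<le> pi/2" "-pi \<le> lo" "lo \<le> 0" "0 \<le> hi" "hi \<le> pi"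
    and y: "y \<in> convex hull (ellipse_arc c1 c2 R \<alpha> ` {lo..hi})"
  shows "\<exists>\<theta>\<in>{lo..hi}. ellipse_arc c1 c2 R \<alpha> \<theta> \<le> y"
proof (rule ccontr)
  let ?f = "ellipse_arc c1 c2 R \<alpha>"
  assume none: "\<not> ?thesis"
  obtain \<theta>1 where \<theta>1: "\<theta>1 \<in> {lo..hi}" "fst (?f \<theta>1) \<le> fst y"
    using convex_hull_inner_le[OF y, of "(1, 0)"] by (auto simp: inner_prod_def)
  obtain \<theta>2 where \<theta>2: "\<theta>2 \<in> {lo..hi}" "snd (?f \<theta>2) \<le> snd y"
    using convex_hull_inner_le[OF y, of "(0, 1)"] by (auto simp: inner_prod_def)
  define D where "D = 2 * R * sin \<alpha>"
  define z where "z = fst y - snd y - c1 + c2"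
  have "snd y < snd (?f \<theta>1)" "fst y < fst (?f \<theta>2)"
    using none \<theta>1 \<theta>2 unfolding less_eq_prod_def by (meson not_le)+
  then have below: "D * sin \<theta>1 < z" and above: "z < D * sin \<theta>2"
    using \<theta>1(2) \<theta>2(2) ellipse_arc_fst_minus_snd[of c1 c2 R \<alpha> \<theta>1]
      ellipse_arc_fst_minus_snd[of c1 c2 R \<alpha> \<theta>2]
    unfolding D_def z_def by linarith+
  have "0 \<le> D" using assms by (simp add: D_def sin_ge_zero)
  moreover from below above have "D \<noteq> 0" by auto
  ultimately have "0 < D" by simp
  then have "\<alpha> \<noteq> 0" by (auto simp: D_def)
  with assms(2) have "0 < \<alpha>" by simp
  from \<open>0 < D\<close> below above have "sin \<theta>1 < z / D" "z / D < sin \<theta>2"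
    by (simp_all add: field_simps)
  then obtain s where s: "s \<in> {lo..hi}" "0 < cos s" "sin s = z / D"
    using sin_attains_with_pos_cos assms(4-7) \<theta>1(1) \<theta>2(1) by metis
  have "D * sin s = z" using s(3) \<open>0 < D\<close> by simp
  then have "fst (?f s) - fst y = snd (?f s) - snd y"
    using ellipse_arc_fst_minus_snd[of c1 c2 R \<alpha> s] unfolding D_def z_def by linarith
  then have "?f s \<le> y"
    using ellipse_arc_le_if_diagonal_in_convex_hull assms(1,3) \<open>0 < \<alpha>\<close> s(2) y by blast
  with s(1) none show False by blast
qed

theorem lemma1:
  fixes g b V1 V2 \<theta>lo \<theta>hi :: real
  assumes "g \<ge> 0" and "b \<ge> 0"
    and "V1 > 0" and "V2 > 0"
    and "-pi \<le> \<theta>lo" and "\<theta>lo \<le> 0"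
    and "0 \<le> \<theta>hi" and "\<theta>hi \<le> pi"
  defines "P \<equiv> two_bus_injections g b V1 V2 ` {\<theta>lo..\<theta>hi}"
  shows "pareto_set P = pareto_set (convex hull P)"
proof -
  obtain R \<alpha> where polar: "0 \<le> R" "0 \<le> \<alpha>" "\<alpha> \<le> pi/2"
      "V1 * V2 * g = R * cos \<alpha>" "V1 * V2 * b = R * sin \<alpha>"
    using nonneg_polar_coordinates[of "V1 * V2 * g" "V1 * V2 * b"] assms(1-4) by auto
  have P: "P = ellipse_arc (V1\<^sup>2 * g) (V2\<^sup>2 * g) R \<alpha> ` {\<theta>lo..\<theta>hi}"
    unfolding P_def two_bus_injections_eq_ellipse_arc[OF polar(4,5)] ..
  show ?thesis
  proof (rule pareto_set_eq_if_minorized)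
    show "P \<subseteq> convex hull P" by (rule hull_subset)
  next
    fix y assume "y \<in> convex hull P"
    then show "\<exists>p\<in>P. p \<le> y"
      using ellipse_arc_minorizes_convex_hull[OF polar(1-3) assms(5-8)] unfolding P by blast
  qed
qed

end
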